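(* Let $N\in\mathbb{N}$, $h=L/N$, $M>0$, $\mathcal{M}_0>0$, let $\mathcal{M}$ be a mobility function and $\phi^n\in\mathcal{C}_{\rm per}$ be such that the face-centered mobility $\check{\mathcal{M}}^n$ satisfies $\check{\mathcal{M}}^n\ge\mathcal{M}_0$ at all face centers. Suppose $\phi_1,\phi_2\in\mathcal{C}_{\rm per}$ satisfy $\langle\phi_1-\phi_2,1\rangle=0$, $\|\phi_1\|_\infty<1$ and $\|\phi_2\|_\infty\le M$. Then $$\|\mathcal{L}_{\check{\mathcal{M}}^n}^{-1}(\phi_1-\phi_2)\|_\infty\le C_4:=C_3\mathcal{M}_0^{-1}h^{-1/2},$$ where $C_3>0$ depends only upon $M$ and $\Omega$.
   Context: $\Omega=(0,L)^3$, periodic; $p_i=(i-\tfrac12)h$. $\mathcal{C}_{\rm per}$: real $N$-periodic grid functions on cell centers; $\langle\nu,\xi\rangle=h^3\sum_{i,j,k=1}^N\nu_{i,j,k}\xi_{i,j,k}$; $\mathring{\mathcal{C}}_{\rm per}$: those with zero sum; $\|\nu\|_\infty=\max|\nu_{i,j,k}|$. The face-centered mobility is $\check{\mathcal{M}}^n_{i+1/2,j,k}=\mathcal{M}(\tfrac12(\phi^n_{i+1,j,k}+\phi^n_{i,j,k}))$ and analogously on $y$- and $z$-faces. For a positive face function $\mathcal{D}$, $\nabla_h\cdot(\mathcal{D}\nabla_h\nu)_{i,j,k}=h^{-2}[\mathcal{D}_{i+1/2,j,k}(\nu_{i+1,j,k}-\nu_{i,j,k})-\mathcal{D}_{i-1/2,j,k}(\nu_{i,j,k}-\nu_{i-1,j,k})]$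 plus the analogous $y$ and $z$ terms. $\mathcal{L}_{\check{\mathcal{M}}^n}^{-1}\psi$, for $\psi\in\mathring{\mathcal{C}}_{\rm per}$, is the unique $v\in\mathring{\mathcal{C}}_{\rm per}$ with $-\nabla_h\cdot(\check{\mathcal{M}}^n\nabla_h v)=\psi$. *)

theory Defs
  imports Complex_Main
begin

type_synonym grid = "int \<Rightarrow> int \<Rightarrow> int \<Rightarrow> real"

text \<open>Cell-centred grid functions, indexed by integers (i,j,k); cell (i,j,k) with
  1 <= i,j,k <= N is centred at ((i-1/2)h,(j-1/2)h,(k-1/2)h).  N-periodic in each index.\<close>
definition C_per :: "nat \<Rightarrow> grid set" where
  "C_per N = {f. \<forall>i j k. f (i + int N) j k = f i j k \<and> f i (j + int N) k = f i j k
                         \<and> f i j (k + int N) = f i j k}"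

definition cells :: "nat \<Rightarrow> (int \<times> int \<times> int) set" where
  "cells N = {1..int N} \<times> {1..int N} \<times> {1..int N}"

definition ip :: "real \<Rightarrow> nat \<Rightarrow> grid \<Rightarrow> grid \<Rightarrow> real" where
  "ip h N \<nu> \<xi> = h ^ 3 * (\<Sum>(i,j,k)\<in>cells N. \<nu> i j k * \<xi> i j k)"

definition C_per0 :: "nat \<Rightarrow> grid set" where
  "C_per0 N = {f \<in> C_per N. (\<Sum>(i,j,k)\<in>cells N. f i j k) = 0}"

definition sup_norm :: "nat \<Rightarrow> grid \<Rightarrow> real" where
  "sup_norm N \<nu> = Max ((\<lambda>(i,j,k). \<bar>\<nu> i j k\<bar>) ` cells N)"

text \<open>Face functions: Dx i j k is the value at face (i+1/2,j,k), Dy i j k at (i,j+1/2,k),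
  Dz i j k at (i,j,k+1/2).\<close>
definition face_mob_x :: "(real \<Rightarrow> real) \<Rightarrow> grid \<Rightarrow> grid" where
  "face_mob_x Mob \<phi> i j k = Mob ((\<phi> (i+1) j k + \<phi> i j k) / 2)"
definition face_mob_y :: "(real \<Rightarrow> real) \<Rightarrow> grid \<Rightarrow> grid" where
  "face_mob_y Mob \<phi> i j k = Mob ((\<phi> i (j+1) k + \<phi> i j k) / 2)"
definition face_mob_z :: "(real \<Rightarrow> real) \<Rightarrow> grid \<Rightarrow> grid" where
  "face_mob_z Mob \<phi> i j k = Mob ((\<phi> i j (k+1) + \<phi> i j k) / 2)"

definition div_grad :: "real \<Rightarrow> grid \<Rightarrow> grid \<Rightarrow> grid \<Rightarrow> grid \<Rightarrow> grid" where
  "div_grad h Dx Dy Dz v i j k =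
     (Dx i j k * (v (i+1) j k - v i j k) - Dx (i-1) j k * (v i j k - v (i-1) j k)
    + Dy i j k * (v i (j+1) k - v i j k) - Dy i (j-1) k * (v i j k - v i (j-1) k)
    + Dz i j k * (v i j (k+1) - v i j k) - Dz i j (k-1) * (v i j k - v i j (k-1))) / h^2"

definition L_inv :: "nat \<Rightarrow> real \<Rightarrow> (real \<Rightarrow> real) \<Rightarrow> grid \<Rightarrow> grid \<Rightarrow> grid" where
  "L_inv N h Mob \<phi>n \<psi> = (THE v. v \<in> C_per0 N \<and>
      (\<forall>i j k. - div_grad h (face_mob_x Mob \<phi>n) (face_mob_y Mob \<phi>n) (face_mob_z Mob \<phi>n) v i j k
               = \<psi> i j k))"

end

theory Submission
  imports Defs "HOL-Library.Function_Algebras" "HOL-Analysis.Convex"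
begin

(* Write v = L_inv (phi1 - phi2) and let E(v) be the sum of the squared forward differences of v
  over one period (no powers of h).  Testing the equation with v and summing by parts gives
  M0 E(v) <= h^2 <v, phi1 - phi2> (plain sums), which is at most h^2 (1 + M) |v|_1; by Cauchy-Schwarz
  and a discrete Poincare inequality, |v|_1 <= N^(3/2) |v|_2 <= sqrt 3 N^(5/2) E(v)^(1/2).
  Independently, comparing the averages of a zero-mean v over dyadic cubes bounds
  |v| <= 4 sqrt (24 E(v)) pointwise.  Since E(v) = h^(-1) |grad_h v|^2 in the scaled norm, this is
  where h^(-1/2) comes from; with h N = L everything combines to the claimed bound.  The same
  coercivity makes the operator injective on zero-mean periodic functions, so by finite
  dimensionality the equation is uniquely solvable and L_inv is its solution. *)

section \<open>Sums over one period\<close>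

definition cell_sum :: "nat \<Rightarrow> grid \<Rightarrow> real" where
  "cell_sum N g = (\<Sum>(i,j,k)\<in>cells N. g i j k)"

lemma sum_int_interval_eq: "(\<Sum>i\<in>{1..int N}. f i) = (\<Sum>n<N. f (1 + int n))"
proof -
  have "{1..int N} = (\<lambda>n. 1 + int n) ` {..<N}"
  proof (intro set_eqI iffI)
    fix x :: int assume "x \<in> {1..int N}"
    then show "x \<in> (\<lambda>n. 1 + int n) ` {..<N}" by (intro image_eqI[of _ _ "nat (x - 1)"]) auto
  qed auto
  moreover have "inj_on (\<lambda>n::nat. 1 + int n) {..<N}" by (auto simp: inj_on_def)
  ultimately show ?thesis by (simp add: sum.reindex)
qed

lemma cell_sum_nested:
  "cell_sum N g = (\<Sum>n1<N. \<Sum>n2<N. \<Sum>n3<N. g (1 + int n1) (1 + int n2) (1 + int n3))"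
  unfolding cell_sum_def cells_def by (simp add: sum.cartesian_product[symmetric] sum_int_interval_eq)

lemma periodic_window_sum:
  fixes g :: "int \<Rightarrow> 'a::comm_monoid_add"
  assumes per: "\<And>t. g (t + int N) = g t"
  shows "(\<Sum>n<N. g (a + int n)) = (\<Sum>n<N. g (b + int n))"
proof -
  have step: "(\<Sum>n<N. g (t + 1 + int n)) = (\<Sum>n<N. g (t + int n))" for t
  proof (cases N)
    case (Suc m)
    have "(\<Sum>n<N. g (t + 1 + int n)) = (\<Sum>n<m. g (t + int (Suc n))) + g (t + int N)"
      using Suc by (simp add: algebra_simps)
    also have "g (t + int N) = g t" by (rule per)
    finally show ?thesis unfolding Suc sum.lessThan_Suc_shift by (simp add: add.commute)
  qed simp
  have "(\<Sum>n<N. g (a + int n)) = (\<Sum>n<N. g (int n))" for a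
  proof (induction a rule: int_induct[where k=0])
    case (step1 t) then show ?case using step[of t] by simp
  next
    case (step2 t) then show ?case using step[of "t - 1"] by simp
  qed simp
  then show ?thesis by simp
qed

lemma C_per_periodic:
  assumes "f \<in> C_per N"
  shows "f (i + int N) j k = f i j k" "f i (j + int N) k = f i j k" "f i j (k + int N) = f i j k"
  using assms by (auto simp: C_per_def)

lemma periodic_nested_sum:
  assumes g: "g \<in> C_per N"
  shows "(\<Sum>n1<N. \<Sum>n2<N. \<Sum>n3<N. g (a1 + int n1) (a2 + int n2) (a3 + int n3)) = cell_sum N g"
proof -
  have "(\<Sum>n3<N. g i j (a3 + int n3)) = (\<Sum>n3<N. g i j (1 + int n3))" for i j
    by (rule periodic_window_sum) (rule C_per_periodic(3)[OF g])
  moreover have "(\<Sum>n2<N. \<Sum>n3<N. g i (a2 + int n2) (1 + int n3))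
      = (\<Sum>n2<N. \<Sum>n3<N. g i (1 + int n2) (1 + int n3))" for i
    by (rule periodic_window_sum[where g = "\<lambda>j. \<Sum>n3<N. g i j (1 + int n3)"])
       (simp add: C_per_periodic(2)[OF g])
  moreover have "(\<Sum>n1<N. \<Sum>n2<N. \<Sum>n3<N. g (a1 + int n1) (1 + int n2) (1 + int n3))
      = (\<Sum>n1<N. \<Sum>n2<N. \<Sum>n3<N. g (1 + int n1) (1 + int n2) (1 + int n3))"
    by (rule periodic_window_sum[where g = "\<lambda>i. \<Sum>n2<N. \<Sum>n3<N. g i (1 + int n2) (1 + int n3)"])
       (simp add: C_per_periodic(1)[OF g])
  ultimately show ?thesis by (simp add: cell_sum_nested)
qed

lemma cell_sum_shift:
  assumes "g \<in> C_per N"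
  shows "cell_sum N (\<lambda>i j k. g (i + a) (j + b) (k + c)) = cell_sum N g"
  using periodic_nested_sum[OF assms, of "1 + a" "1 + b" "1 + c"]
  by (simp add: cell_sum_nested algebra_simps)

lemma cell_sum_add: "cell_sum N (\<lambda>i j k. f i j k + g i j k) = cell_sum N f + cell_sum N g"
  and cell_sum_diff: "cell_sum N (\<lambda>i j k. f i j k - g i j k) = cell_sum N f - cell_sum N g"
  and cell_sum_minus: "cell_sum N (\<lambda>i j k. - f i j k) = - cell_sum N f"
  and cell_sum_cmult: "cell_sum N (\<lambda>i j k. c * f i j k) = c * cell_sum N f"
  and cell_sum_const: "cell_sum N (\<lambda>i j k. c) = real N ^ 3 * c"
  by (simp_all add: cell_sum_nested sum.distrib sum_subtractf sum_negf sum_distrib_left power3_eq_cube)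

lemma cell_sum_mono: "(\<And>i j k. f i j k \<le> g i j k) \<Longrightarrow> cell_sum N f \<le> cell_sum N g"
  unfolding cell_sum_nested by (intro sum_mono) auto

lemma cell_sum_nonneg: "(\<And>i j k. 0 \<le> f i j k) \<Longrightarrow> 0 \<le> cell_sum N f"
  unfolding cell_sum_nested by (intro sum_nonneg) auto

lemma C_per0_iff: "v \<in> C_per0 N \<longleftrightarrow> v \<in> C_per N \<and> cell_sum N v = 0"
  by (simp add: C_per0_def cell_sum_def)

lemma C_per_shift:
  assumes "f \<in> C_per N"
  shows "(\<lambda>i j k. f (i + a) (j + b) (k + c)) \<in> C_per N"
  using C_per_periodic[OF assms, of "_ + a" "_ + b" "_ + c"] unfolding C_per_def
  by (simp add: add.commute add.left_commute)

lemma C_per_add: "f \<in> C_per N \<Longrightarrow> g \<in> C_per N \<Longrightarrow> (\<lambda>i j k. f i j k + g i j k) \<in> C_per N"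
  and C_per_diff: "f \<in> C_per N \<Longrightarrow> g \<in> C_per N \<Longrightarrow> (\<lambda>i j k. f i j k - g i j k) \<in> C_per N"
  and C_per_mult: "f \<in> C_per N \<Longrightarrow> g \<in> C_per N \<Longrightarrow> (\<lambda>i j k. f i j k * g i j k) \<in> C_per N"
  and C_per_comp: "f \<in> C_per N \<Longrightarrow> (\<lambda>i j k. F (f i j k)) \<in> C_per N"
  and C_per_const: "(\<lambda>i j k. c) \<in> C_per N"
  by (simp_all add: C_per_def)

section \<open>Summation by parts\<close>

definition fdiff :: "int \<Rightarrow> int \<Rightarrow> int \<Rightarrow> grid \<Rightarrow> grid" where
  "fdiff a b c v i j k = v (i + a) (j + b) (k + c) - v i j k"

definition div_flux :: "grid \<Rightarrow> int \<Rightarrow> int \<Rightarrow> int \<Rightarrow> grid \<Rightarrow> grid" where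
  "div_flux D a b c v i j k =
     D i j k * fdiff a b c v i j k - D (i - a) (j - b) (k - c) * fdiff a b c v (i - a) (j - b) (k - c)"

definition energy :: "nat \<Rightarrow> grid \<Rightarrow> real" where
  "energy N v = cell_sum N (\<lambda>i j k.
     (fdiff 1 0 0 v i j k)^2 + (fdiff 0 1 0 v i j k)^2 + (fdiff 0 0 1 v i j k)^2)"

lemma energy_nonneg: "0 \<le> energy N v"
  unfolding energy_def by (rule cell_sum_nonneg) simp

lemma div_grad_div_flux: "div_grad h Dx Dy Dz v i j k =
   (div_flux Dx 1 0 0 v i j k + div_flux Dy 0 1 0 v i j k + div_flux Dz 0 0 1 v i j k) / h^2"
  unfolding div_grad_def div_flux_def fdiff_def by simp

lemma C_per_fdiff: "v \<in> C_per N \<Longrightarrow> fdiff a b c v \<in> C_per N"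
  using C_per_diff[OF C_per_shift] unfolding fdiff_def[abs_def] by blast

lemma cell_sum_div_flux:
  assumes "v \<in> C_per N" "D \<in> C_per N"
  shows "cell_sum N (div_flux D a b c v) = 0"
  using cell_sum_shift[OF C_per_mult[OF assms(2) C_per_fdiff[OF assms(1)]], of "- a" "- b" "- c"]
  by (simp add: div_flux_def[abs_def] cell_sum_diff)

lemma cell_sum_by_parts:
  assumes v: "v \<in> C_per N" and D: "D \<in> C_per N"
  shows "cell_sum N (\<lambda>i j k. v i j k * div_flux D a b c v i j k)
       = - cell_sum N (\<lambda>i j k. D i j k * (fdiff a b c v i j k)^2)"
proof -
  define F where "F i j k = D i j k * fdiff a b c v i j k" for i j k
  have "F \<in> C_per N" unfolding F_def[abs_def] by (intro C_per_mult D C_per_fdiff v)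
  then have "(\<lambda>i j k. v i j k * F (i - a) (j - b) (k - c)) \<in> C_per N"
    using C_per_shift[of F N "- a" "- b" "- c"] by (intro C_per_mult v) simp
  from cell_sum_shift[OF this, of a b c]
  have "cell_sum N (\<lambda>i j k. v i j k * F (i - a) (j - b) (k - c))
      = cell_sum N (\<lambda>i j k. v (i + a) (j + b) (k + c) * F i j k)" by simp
  then have "cell_sum N (\<lambda>i j k. v i j k * (F i j k - F (i - a) (j - b) (k - c)))
      = cell_sum N (\<lambda>i j k. (-1) * (fdiff a b c v i j k * F i j k))"
    unfolding cell_sum_cmult by (simp add: right_diff_distrib cell_sum_diff fdiff_def left_diff_distrib)
  then show ?thesis
    unfolding cell_sum_cmult F_def div_flux_def
    by (simp add: power2_eq_square mult.commute mult.left_commute)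
qed

lemma cell_sum_div_grad:
  assumes "v \<in> C_per N" "Dx \<in> C_per N" "Dy \<in> C_per N" "Dz \<in> C_per N"
  shows "cell_sum N (div_grad h Dx Dy Dz v) = 0"
  using cell_sum_div_flux[OF assms(1,2), of 1 0 0] cell_sum_div_flux[OF assms(1,3), of 0 1 0]
    cell_sum_div_flux[OF assms(1,4), of 0 0 1]
  by (simp add: div_grad_div_flux[abs_def] divide_inverse mult.commute cell_sum_add cell_sum_cmult)

lemma div_grad_coercive:
  assumes v: "v \<in> C_per N" and D: "Dx \<in> C_per N" "Dy \<in> C_per N" "Dz \<in> C_per N"
    and lower: "\<And>i j k. M0 \<le> Dx i j k \<and> M0 \<le> Dy i j k \<and> M0 \<le> Dz i j k"
    and h: "h \<noteq> 0"
  shows "M0 * energy N v \<le> h^2 * cell_sum N (\<lambda>i j k. v i j k * - div_grad h Dx Dy Dz v i j k)"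
proof -
  have "h^2 * cell_sum N (\<lambda>i j k. v i j k * - div_grad h Dx Dy Dz v i j k)
      = - cell_sum N (\<lambda>i j k. v i j k * div_flux Dx 1 0 0 v i j k)
        - cell_sum N (\<lambda>i j k. v i j k * div_flux Dy 0 1 0 v i j k)
        - cell_sum N (\<lambda>i j k. v i j k * div_flux Dz 0 0 1 v i j k)"
    unfolding cell_sum_cmult[symmetric] cell_sum_minus[symmetric] cell_sum_diff[symmetric]
    by (rule arg_cong[where f = "cell_sum N"]) (use h in \<open>simp add: fun_eq_iff div_grad_div_flux field_simps\<close>)
  also have "\<dots> = cell_sum N (\<lambda>i j k. Dx i j k * (fdiff 1 0 0 v i j k)^2
      + Dy i j k * (fdiff 0 1 0 v i j k)^2 + Dz i j k * (fdiff 0 0 1 v i j k)^2)"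
    by (simp add: cell_sum_by_parts v D cell_sum_add)
  also have "\<dots> \<ge> M0 * energy N v"
    unfolding energy_def cell_sum_cmult[symmetric]
    by (intro cell_sum_mono) (simp add: distrib_left add_mono mult_right_mono lower)
  finally show ?thesis .
qed

section \<open>Discrete Poincare inequalities\<close>

lemma sq_mean_le_mean_sq:
  fixes f :: "'a \<Rightarrow> real"
  assumes "finite A" "A \<noteq> {}"
  shows "((\<Sum>p\<in>A. f p) / card A)^2 \<le> (\<Sum>p\<in>A. (f p)^2) / card A"
proof -
  have "card A > 0" using assms by (simp add: card_gt_0_iff)
  then show ?thesis
    using sum_squared_le_sum_of_squares[of f A]
    by (simp add: power_divide divide_le_eq le_divide_eq power2_eq_square mult.assoc)
qed

lemma path_sq_diff_le:
  fixes f :: "nat \<Rightarrow> real"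
  assumes "n < s" "m < s"
  shows "(f n - f m)^2 \<le> real s * (\<Sum>t<s. (f (t + 1) - f t)^2)"
proof -
  have *: "(f b - f a)^2 \<le> real s * (\<Sum>t<s. (f (t + 1) - f t)^2)" if "a \<le> b" "b < s" for a b
  proof -
    have "(f b - f a)^2 = (\<Sum>t\<in>{a..<b}. f (t + 1) - f t)^2"
      using that(1) by (simp add: sum_Suc_diff')
    also have "\<dots> \<le> (\<Sum>t\<in>{a..<b}. (f (t + 1) - f t)^2) * real (card {a..<b})"
      by (rule sum_squared_le_sum_of_squares)
    also have "\<dots> \<le> (\<Sum>t<s. (f (t + 1) - f t)^2) * real s"
      using that by (intro mult_mono sum_mono2 sum_nonneg) auto
    finally show ?thesis by (simp add: mult.commute)
  qed
  show ?thesis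
    using *[of m n] *[of n m] assms by (cases "m \<le> n") (auto simp: power2_commute)
qed

lemma sq_sum3_le: "((x::real) + y + z)^2 \<le> 3 * (x^2 + y^2 + z^2)"
proof -
  have "0 \<le> (x - y)^2 + (y - z)^2 + (x - z)^2" by simp
  then show ?thesis by (simp add: power2_eq_square algebra_simps)
qed

lemma cube_sq_diff_sum_le:
  fixes u :: "nat \<Rightarrow> nat \<Rightarrow> nat \<Rightarrow> real"
  shows "(\<Sum>p1<s. \<Sum>p2<s. \<Sum>p3<s. \<Sum>q1<s. \<Sum>q2<s. \<Sum>q3<s. (u p1 p2 p3 - u q1 q2 q3)^2)
    \<le> 3 * real s ^ 5 * (\<Sum>n1<s. \<Sum>n2<s. \<Sum>n3<s. (u (n1 + 1) n2 n3 - u n1 n2 n3)^2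
          + (u n1 (n2 + 1) n3 - u n1 n2 n3)^2 + (u n1 n2 (n3 + 1) - u n1 n2 n3)^2)"
proof -
  define Lx where "Lx p2 p3 = (\<Sum>t<s. (u (t + 1) p2 p3 - u t p2 p3)^2)" for p2 p3
  define Ly where "Ly q1 p3 = (\<Sum>t<s. (u q1 (t + 1) p3 - u q1 t p3)^2)" for q1 p3
  define Lz where "Lz q1 q2 = (\<Sum>t<s. (u q1 q2 (t + 1) - u q1 q2 t)^2)" for q1 q2
  have pointwise: "(u p1 p2 p3 - u q1 q2 q3)^2 \<le> 3 * real s * (Lx p2 p3 + Ly q1 p3 + Lz q1 q2)"
    if "p1 < s" "p2 < s" "p3 < s" "q1 < s" "q2 < s" "q3 < s" for p1 p2 p3 q1 q2 q3
  proof -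
    have "(u p1 p2 p3 - u q1 q2 q3)^2 = ((u p1 p2 p3 - u q1 p2 p3) + (u q1 p2 p3 - u q1 q2 p3)
        + (u q1 q2 p3 - u q1 q2 q3))^2" by simp
    also have "\<dots> \<le> 3 * ((u p1 p2 p3 - u q1 p2 p3)^2 + (u q1 p2 p3 - u q1 q2 p3)^2
        + (u q1 q2 p3 - u q1 q2 q3)^2)" by (rule sq_sum3_le)
    also have "\<dots> \<le> 3 * (real s * Lx p2 p3 + real s * Ly q1 p3 + real s * Lz q1 q2)"
      unfolding Lx_def Ly_def Lz_def using that
      by (intro mult_left_mono add_mono path_sq_diff_le) auto
    finally show ?thesis by (simp add: algebra_simps)
  qed
  have "(\<Sum>p1<s. \<Sum>p2<s. \<Sum>p3<s. \<Sum>q1<s. \<Sum>q2<s. \<Sum>q3<s. (u p1 p2 p3 - u q1 q2 q3)^2)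
     \<le> (\<Sum>p1<s. \<Sum>p2<s. \<Sum>p3<s. \<Sum>q1<s. \<Sum>q2<s. \<Sum>q3<s. 3 * real s * (Lx p2 p3 + Ly q1 p3 + Lz q1 q2))"
    by (intro sum_mono pointwise) auto
  also have "\<dots> = 3 * real s ^ 5 * ((\<Sum>p2<s. \<Sum>p3<s. Lx p2 p3) + (\<Sum>q1<s. \<Sum>p3<s. Ly q1 p3)
       + (\<Sum>q1<s. \<Sum>q2<s. Lz q1 q2))"
  proof -
    have "(\<Sum>p3<s. \<Sum>q1<s. Ly q1 p3) = (\<Sum>q1<s. \<Sum>p3<s. Ly q1 p3)" by (rule sum.swap)
    then show ?thesis
      by (simp add: sum.distrib sum_distrib_left[symmetric]) (simp add: algebra_simps eval_nat_numeral)
  qed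
  also have "(\<Sum>p2<s. \<Sum>p3<s. Lx p2 p3) = (\<Sum>n1<s. \<Sum>n2<s. \<Sum>n3<s. (u (n1 + 1) n2 n3 - u n1 n2 n3)^2)"
    unfolding Lx_def by (subst sum.swap) (rule sum.cong[OF refl], rule sum.swap)
  also have "(\<Sum>q1<s. \<Sum>p3<s. Ly q1 p3) = (\<Sum>n1<s. \<Sum>n2<s. \<Sum>n3<s. (u n1 (n2 + 1) n3 - u n1 n2 n3)^2)"
    unfolding Ly_def by (rule sum.cong[OF refl], rule sum.swap)
  also have "(\<Sum>q1<s. \<Sum>q2<s. Lz q1 q2) = (\<Sum>n1<s. \<Sum>n2<s. \<Sum>n3<s. (u n1 n2 (n3 + 1) - u n1 n2 n3)^2)"
    unfolding Lz_def ..
  finally show ?thesis by (simp add: sum.distrib)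
qed

definition cube :: "nat \<Rightarrow> (nat \<times> nat \<times> nat) set" where
  "cube s = {..<s} \<times> {..<s} \<times> {..<s}"

definition cube_val :: "grid \<Rightarrow> int \<Rightarrow> int \<Rightarrow> int \<Rightarrow> nat \<times> nat \<times> nat \<Rightarrow> real" where
  "cube_val v a1 a2 a3 = (\<lambda>(n1, n2, n3). v (a1 + int n1) (a2 + int n2) (a3 + int n3))"

definition cube_avg :: "grid \<Rightarrow> int \<Rightarrow> int \<Rightarrow> int \<Rightarrow> nat \<Rightarrow> real" where
  "cube_avg v a1 a2 a3 s = (\<Sum>p\<in>cube s. cube_val v a1 a2 a3 p) / card (cube s)"

lemma finite_cube [simp]: "finite (cube s)"
  by (simp add: cube_def)

lemma card_cube [simp]: "card (cube s) = s ^ 3"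
  by (simp add: cube_def card_cartesian_product power3_eq_cube)

lemma cube_nonempty: "1 \<le> s \<Longrightarrow> cube s \<noteq> {}"
  by (simp add: cube_def lessThan_empty_iff)

lemma sum_cube: "(\<Sum>p\<in>cube s. H p) = (\<Sum>n1<s. \<Sum>n2<s. \<Sum>n3<s. H (n1, n2, n3))"
  unfolding cube_def by (simp add: sum.cartesian_product')

lemma cube_avg_1: "cube_avg v a1 a2 a3 1 = v a1 a2 a3"
  by (simp add: cube_avg_def sum_cube cube_val_def)

lemma cube_avg_period:
  "v \<in> C_per N \<Longrightarrow> cube_avg v a1 a2 a3 N = cell_sum N v / real N ^ 3"
  by (simp add: cube_avg_def sum_cube cube_val_def periodic_nested_sum)

lemma nested_sum_mono:
  fixes F :: "nat \<Rightarrow> nat \<Rightarrow> nat \<Rightarrow> real"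
  assumes "\<And>x y z. 0 \<le> F x y z" "s \<le> N"
  shows "(\<Sum>n1<s. \<Sum>n2<s. \<Sum>n3<s. F n1 n2 n3) \<le> (\<Sum>n1<N. \<Sum>n2<N. \<Sum>n3<N. F n1 n2 n3)"
proof -
  have "(\<Sum>n1<s. \<Sum>n2<s. \<Sum>n3<s. F n1 n2 n3) \<le> (\<Sum>n1<s. \<Sum>n2<s. \<Sum>n3<N. F n1 n2 n3)"
    using assms by (intro sum_mono sum_mono2) auto
  also have "\<dots> \<le> (\<Sum>n1<s. \<Sum>n2<N. \<Sum>n3<N. F n1 n2 n3)"
    using assms by (intro sum_mono sum_mono2 sum_nonneg) auto
  also have "\<dots> \<le> (\<Sum>n1<N. \<Sum>n2<N. \<Sum>n3<N. F n1 n2 n3)"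
    using assms by (intro sum_mono2 sum_nonneg) auto
  finally show ?thesis .
qed

lemma cube_pair_sum_le_energy:
  assumes v: "v \<in> C_per N" and "s \<le> N"
  shows "(\<Sum>p\<in>cube s. \<Sum>q\<in>cube s. (cube_val v a1 a2 a3 p - cube_val v a1 a2 a3 q)^2)
    \<le> 3 * real s ^ 5 * energy N v"
proof -
  define u where "u n1 n2 n3 = v (a1 + int n1) (a2 + int n2) (a3 + int n3)" for n1 n2 n3
  define G where "G i j k = (fdiff 1 0 0 v i j k)^2 + (fdiff 0 1 0 v i j k)^2 + (fdiff 0 0 1 v i j k)^2"
    for i j k
  have G: "G \<in> C_per N"
    using C_per_fdiff[OF v, of 1 0 0] C_per_fdiff[OF v, of 0 1 0] C_per_fdiff[OF v, of 0 0 1]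
    unfolding G_def[abs_def] by (simp add: C_per_def)
  have "(\<Sum>p\<in>cube s. \<Sum>q\<in>cube s. (cube_val v a1 a2 a3 p - cube_val v a1 a2 a3 q)^2)
      = (\<Sum>p1<s. \<Sum>p2<s. \<Sum>p3<s. \<Sum>q1<s. \<Sum>q2<s. \<Sum>q3<s. (u p1 p2 p3 - u q1 q2 q3)^2)"
    by (simp add: sum_cube cube_val_def u_def)
  also have "\<dots> \<le> 3 * real s ^ 5 * (\<Sum>n1<s. \<Sum>n2<s. \<Sum>n3<s. (u (n1 + 1) n2 n3 - u n1 n2 n3)^2
          + (u n1 (n2 + 1) n3 - u n1 n2 n3)^2 + (u n1 n2 (n3 + 1) - u n1 n2 n3)^2)"
    by (rule cube_sq_diff_sum_le)
  also have "\<dots> = 3 * real s ^ 5 * (\<Sum>n1<s. \<Sum>n2<s. \<Sum>n3<s. G (a1 + int n1) (a2 + int n2) (a3 + int n3))"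
    by (simp add: u_def G_def fdiff_def ac_simps)
  also have "\<dots> \<le> 3 * real s ^ 5 * (\<Sum>n1<N. \<Sum>n2<N. \<Sum>n3<N. G (a1 + int n1) (a2 + int n2) (a3 + int n3))"
    using assms(2) by (intro mult_left_mono nested_sum_mono) (auto simp: G_def)
  also have "\<dots> = 3 * real s ^ 5 * energy N v"
    using periodic_nested_sum[OF G, of a1 a2 a3] by (simp add: energy_def G_def[abs_def])
  finally show ?thesis .
qed

lemma cube_variance_le:
  assumes v: "v \<in> C_per N" and s: "1 \<le> s" "s \<le> N"
  shows "(\<Sum>p\<in>cube s. (cube_val v a1 a2 a3 p - cube_avg v a1 a2 a3 s)^2) \<le> 3 * real s ^ 2 * energy N v"
proof -
  let ?w = "cube_val v a1 a2 a3" and ?n = "real s ^ 3"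
  have n: "?n > 0" using s by simp
  have "?w p - cube_avg v a1 a2 a3 s = (\<Sum>q\<in>cube s. ?w p - ?w q) / card (cube s)" for p
    using n by (simp add: cube_avg_def sum_subtractf field_simps)
  then have "(?w p - cube_avg v a1 a2 a3 s)^2 \<le> (\<Sum>q\<in>cube s. (?w p - ?w q)^2) / ?n" for p
    using sq_mean_le_mean_sq[OF finite_cube cube_nonempty[OF s(1)], of "\<lambda>q. ?w p - ?w q"] by simp
  then have "(\<Sum>p\<in>cube s. (?w p - cube_avg v a1 a2 a3 s)^2)
      \<le> (\<Sum>p\<in>cube s. \<Sum>q\<in>cube s. (?w p - ?w q)^2) / ?n"
    by (simp add: sum_divide_distrib sum_mono)
  also have "\<dots> \<le> 3 * real s ^ 5 * energy N v / ?n"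
    using n by (intro divide_right_mono cube_pair_sum_le_energy[OF v s(2)]) simp
  also have "\<dots> = 3 * real s ^ 2 * energy N v"
    using n by (simp add: field_simps eval_nat_numeral)
  finally show ?thesis .
qed

lemma cube_avg_step_le:
  assumes v: "v \<in> C_per N" and s: "1 \<le> s'" "s' \<le> s" "s \<le> 2 * s'" "s \<le> N"
  shows "(cube_avg v a1 a2 a3 s' - cube_avg v a1 a2 a3 s)^2 \<le> 24 * energy N v / real s"
proof -
  let ?w = "cube_val v a1 a2 a3" and ?\<mu> = "cube_avg v a1 a2 a3 s" and ?n = "real s' ^ 3"
  have n: "?n > 0" using s by simp
  have "cube_avg v a1 a2 a3 s' - ?\<mu> = (\<Sum>p\<in>cube s'. ?w p - ?\<mu>) / card (cube s')"
    using n by (simp add: cube_avg_def sum_subtractf field_simps)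
  then have "(cube_avg v a1 a2 a3 s' - ?\<mu>)^2 \<le> (\<Sum>p\<in>cube s'. (?w p - ?\<mu>)^2) / ?n"
    using sq_mean_le_mean_sq[OF finite_cube cube_nonempty[OF s(1)], of "\<lambda>p. ?w p - ?\<mu>"] by simp
  also have "\<dots> \<le> (\<Sum>p\<in>cube s. (?w p - ?\<mu>)^2) / ?n"
    using s(2) n by (intro divide_right_mono sum_mono2) (auto simp: cube_def)
  also have "\<dots> \<le> 3 * real s ^ 2 * energy N v / ?n"
    using s n by (intro divide_right_mono cube_variance_le[OF v]) auto
  also have "\<dots> \<le> 24 * energy N v / real s"
  proof -
    have "real s ^ 3 \<le> (2 * real s') ^ 3"
      using s(3) by (intro power_mono) linarith+
    then have "real s ^ 3 * energy N v \<le> 8 * ?n * energy N v"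
      using energy_nonneg[of N v] by (intro mult_right_mono) (simp_all add: power_mult_distrib)
    then have "3 * real s ^ 2 * energy N v * real s \<le> 24 * energy N v * ?n"
      by (simp add: eval_nat_numeral algebra_simps)
    then show ?thesis using s n by (simp add: divide_le_eq le_divide_eq field_simps)
  qed
  finally show ?thesis .
qed

definition dyadic_size :: "nat \<Rightarrow> nat \<Rightarrow> nat" where
  "dyadic_size N k = min (2 ^ k) N"

lemma dyadic_avg_step_le:
  assumes v: "v \<in> C_per N" and N: "1 \<le> N"
  shows "\<bar>cube_avg v a1 a2 a3 (dyadic_size N k) - cube_avg v a1 a2 a3 (dyadic_size N (Suc k))\<bar>
    \<le> sqrt (24 * energy N v) * (1 / sqrt 2) ^ k"
proof (cases "2 ^ k < N")
  case True
  let ?s = "dyadic_size N (Suc k)"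
  have s: "2 ^ k \<le> ?s" "?s \<le> 2 * 2 ^ k" "?s \<le> N"
    using True by (auto simp: dyadic_size_def)
  have "(cube_avg v a1 a2 a3 (2 ^ k) - cube_avg v a1 a2 a3 ?s)^2 \<le> 24 * energy N v / real ?s"
    using s by (intro cube_avg_step_le[OF v]) auto
  also have "\<dots> \<le> 24 * energy N v / 2 ^ k"
  proof -
    have two: "(2::real) ^ k \<le> real ?s"
      using s(1) by (metis of_nat_le_iff of_nat_numeral of_nat_power)
    have "(0::real) < 2 ^ k" by simp
    with two have "0 < real ?s * 2 ^ k" by (meson less_le_trans mult_pos_pos)
    then show ?thesis using energy_nonneg[of N v] by (intro divide_left_mono two) simp_all
  qed
  finally have "\<bar>cube_avg v a1 a2 a3 (2 ^ k) - cube_avg v a1 a2 a3 ?s\<bar> \<le> sqrt (24 * energy N v / 2 ^ k)"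
    by (simp add: real_le_rsqrt)
  also have "\<dots> = sqrt (24 * energy N v) * (1 / sqrt 2) ^ k"
    by (simp add: real_sqrt_divide real_sqrt_power power_one_over)
  finally show ?thesis using True by (simp add: dyadic_size_def)
next
  case False
  then show ?thesis using energy_nonneg[of N v] by (simp add: dyadic_size_def min_absorb2)
qed

lemma dyadic_avg_chain:
  assumes v: "v \<in> C_per N" and N: "1 \<le> N"
  shows "\<bar>v a1 a2 a3 - cube_avg v a1 a2 a3 (dyadic_size N k)\<bar>
    \<le> sqrt (24 * energy N v) * (\<Sum>j<k. (1 / sqrt 2) ^ j)"
proof (induction k)
  case 0
  then show ?case using N cube_avg_1[of v a1 a2 a3] by (simp add: dyadic_size_def)
next
  case (Suc k)
  then show ?case
    using dyadic_avg_step_le[OF v N, of a1 a2 a3 k] by (simp add: distrib_left)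
qed

lemma abs_le_energy_if_mean_zero:
  assumes v: "v \<in> C_per N" and N: "1 \<le> N" and mean: "cell_sum N v = 0"
  shows "\<bar>v a1 a2 a3\<bar> \<le> 4 * sqrt (24 * energy N v)"
proof -
  let ?q = "1 / sqrt 2 :: real"
  have "dyadic_size N N = N" using less_exp[of N] by (simp add: dyadic_size_def)
  then have "\<bar>v a1 a2 a3\<bar> \<le> sqrt (24 * energy N v) * (\<Sum>j<N. ?q ^ j)"
    using dyadic_avg_chain[OF v N, of a1 a2 a3 N] by (simp add: cube_avg_period[OF v] mean)
  moreover have "(\<Sum>j<N. ?q ^ j) \<le> 4"
  proof -
    have "4 / 3 \<le> sqrt (2::real)" by (rule real_le_rsqrt) (simp add: power2_eq_square)
    then have q: "?q \<le> 3 / 4" by (simp add: divide_le_eq field_simps)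
    have "(\<Sum>j<N. ?q ^ j) = (1 - ?q ^ N) / (1 - ?q)"
      using q by (subst sum_gp_strict) auto
    also have "\<dots> \<le> 1 / (1 - ?q)"
      using q by (intro divide_right_mono) auto
    also have "\<dots> \<le> 4" using q by (simp add: divide_le_eq)
    finally show ?thesis .
  qed
  ultimately show ?thesis
    using order_trans mult_left_mono[of _ 4 "sqrt (24 * energy N v)"] energy_nonneg[of N v]
    by (fastforce simp: mult.commute)
qed

lemma mean_zero_poincare:
  assumes v: "v \<in> C_per N" and N: "1 \<le> N" and mean: "cell_sum N v = 0"
  shows "cell_sum N (\<lambda>i j k. (v i j k)^2) \<le> 3 * real N ^ 2 * energy N v"
proof -
  have "cube_avg v 1 1 1 N = 0" by (simp add: cube_avg_period[OF v] mean)
  then show ?thesis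
    using cube_variance_le[OF v N order_refl, of 1 1 1]
    by (simp add: sum_cube cube_val_def cell_sum_nested)
qed

section \<open>Unique solvability\<close>

context vector_space
begin

lemma linear_inj_on_span_imp_surj_on:
  assumes lin: "Vector_Spaces.linear scale scale f" and B: "finite B"
    and into: "f ` span B \<subseteq> span B" and inj: "inj_on f (span B)"
  shows "f ` span B = span B"
proof -
  interpret f: Vector_Spaces.linear scale scale f by (fact lin)
  obtain C where C: "C \<subseteq> span B" "independent C" "span B \<subseteq> span C"
    by (rule basis_exists[of "span B"])
  have finC: "finite C" using independent_span_bound[OF B C(2,1)] by simp
  have spanC: "span C = span B" using C span_minimal[OF C(1) subspace_span] by blast
  have indep: "independent (f ` C)"
    using inj by (intro f.independent_injective_image C(2)) (simp add: spanC)
  have card: "card (f ` C) = card C"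
    using inj_on_subset[OF inj C(1)] by (rule card_image)
  have "span B \<subseteq> span (f ` C)"
  proof
    fix x assume x: "x \<in> span B"
    show "x \<in> span (f ` C)"
    proof (rule ccontr)
      assume nx: "x \<notin> span (f ` C)"
      have "insert x (f ` C) \<subseteq> span C"
        using x into C(1) spanC span_superset[of C] by auto
      then have "card (insert x (f ` C)) \<le> card C"
        using independent_span_bound[OF finC independent_insertI[OF nx indep]] by simp
      moreover have "x \<notin> f ` C" using nx span_superset by blast
      ultimately show False using card finC by simp
    qed
  qed
  then show ?thesis using into f.span_image[of C] spanC by auto
qed

end

definition grid_scale :: "real \<Rightarrow> grid \<Rightarrow> grid" where
  "grid_scale c f = (\<lambda>i j k. c * f i j k)"

interpretation grid: vector_space grid_scale
  by unfold_locales (auto simp: grid_scale_def fun_eq_iff algebra_simps)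

lemma sum_grid_apply: "finite A \<Longrightarrow> (sum F A :: grid) i j k = (\<Sum>a\<in>A. F a i j k)"
  by (induction A rule: finite_induct) auto

definition wrap :: "nat \<Rightarrow> int \<Rightarrow> int" where
  "wrap N t = (t - 1) mod int N + 1"

lemma wrap_in_range: "1 \<le> N \<Longrightarrow> wrap N t \<in> {1..int N}"
  unfolding wrap_def by (simp add: add1_zle_eq)

lemma wrap_period: "wrap N (t + int N) = wrap N t"
proof -
  have "t + int N - 1 = (t - 1) + int N" by simp
  then show ?thesis unfolding wrap_def by (simp only: mod_add_self2)
qed

lemma periodic_wrap:
  fixes g :: "int \<Rightarrow> 'a"
  assumes per: "\<And>t. g (t + int N) = g t"
  shows "g (wrap N t) = g t"
proof -
  have shift: "g (s + m * int N) = g s" for s m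
  proof (induction m rule: int_induct[where k=0])
    case (step1 m) then show ?case using per[of "s + m * int N"] by (simp add: algebra_simps)
  next
    case (step2 m) then show ?case using per[of "s + (m - 1) * int N"] by (simp add: algebra_simps)
  qed simp
  have "t = wrap N t + ((t - 1) div int N) * int N"
    unfolding wrap_def using div_mult_mod_eq[of "t - 1" "int N"] by linarith
  then show ?thesis using shift[of "wrap N t" "(t - 1) div int N"] by simp
qed

lemma C_per_wrap:
  assumes "f \<in> C_per N"
  shows "f (wrap N i) (wrap N j) (wrap N k) = f i j k"
  using periodic_wrap[of "\<lambda>t. f t _ _"] periodic_wrap[of "\<lambda>t. f _ t _"] periodic_wrap[of "\<lambda>t. f _ _ t"]
    C_per_periodic[OF assms] by metis

definition cell_indicator :: "nat \<Rightarrow> int \<times> int \<times> int \<Rightarrow> grid" where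
  "cell_indicator N c i j k = (if (wrap N i, wrap N j, wrap N k) = c then 1 else 0)"

lemma C_per_eq_span:
  assumes N: "1 \<le> N"
  shows "C_per N = grid.span (cell_indicator N ` cells N)"
proof
  have "grid.subspace (C_per N)"
    unfolding grid.subspace_def by (auto simp: C_per_def grid_scale_def)
  moreover have "cell_indicator N c \<in> C_per N" for c
    by (simp add: C_per_def cell_indicator_def wrap_period)
  ultimately show "grid.span (cell_indicator N ` cells N) \<subseteq> C_per N"
    by (intro grid.span_minimal) auto
next
  show "C_per N \<subseteq> grid.span (cell_indicator N ` cells N)"
  proof
    fix f assume f: "f \<in> C_per N"
    have "f = (\<Sum>c\<in>cells N. grid_scale (case c of (a, b, d) \<Rightarrow> f a b d) (cell_indicator N c))"
    proof (intro ext)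
      fix i j k
      have "(wrap N i, wrap N j, wrap N k) \<in> cells N"
        using wrap_in_range[OF N] by (simp add: cells_def)
      then show "f i j k = (\<Sum>c\<in>cells N. grid_scale (case c of (a, b, d) \<Rightarrow> f a b d) (cell_indicator N c)) i j k"
        by (simp add: sum_grid_apply cells_def grid_scale_def cell_indicator_def C_per_wrap[OF f]
              if_distrib[of "(*) _"] cong: if_cong)
    qed
    also have "\<dots> \<in> grid.span (cell_indicator N ` cells N)"
      by (intro grid.span_sum grid.span_scale grid.span_base imageI)
    finally show "f \<in> grid.span (cell_indicator N ` cells N)" .
  qed
qed

lemma div_grad_translate:
  "div_grad h Dx Dy Dz v (i + a) (j + b) (k + c)
   = div_grad h (\<lambda>i j k. Dx (i + a) (j + b) (k + c)) (\<lambda>i j k. Dy (i + a) (j + b) (k + c))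
       (\<lambda>i j k. Dz (i + a) (j + b) (k + c)) (\<lambda>i j k. v (i + a) (j + b) (k + c)) i j k"
  by (simp add: div_grad_def algebra_simps)

lemma C_per_div_grad:
  assumes "v \<in> C_per N" "Dx \<in> C_per N" "Dy \<in> C_per N" "Dz \<in> C_per N"
  shows "div_grad h Dx Dy Dz v \<in> C_per N"
proof -
  have eq: "(\<lambda>i j k. f (i + int N) (j + 0) (k + 0)) = f" "(\<lambda>i j k. f (i + 0) (j + int N) (k + 0)) = f"
    "(\<lambda>i j k. f (i + 0) (j + 0) (k + int N)) = f" if "f \<in> C_per N" for f
    using C_per_periodic[OF that] by auto
  have "div_grad h Dx Dy Dz v (i + int N) (j + 0) (k + 0) = div_grad h Dx Dy Dz v i j k"
    "div_grad h Dx Dy Dz v (i + 0) (j + int N) (k + 0) = div_grad h Dx Dy Dz v i j k"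
    "div_grad h Dx Dy Dz v (i + 0) (j + 0) (k + int N) = div_grad h Dx Dy Dz v i j k" for i j k
    unfolding div_grad_translate eq[OF assms(1)] eq[OF assms(2)] eq[OF assms(3)] eq[OF assms(4)] by simp_all
  then show ?thesis unfolding C_per_def by simp
qed

lemma div_grad_add:
  "div_grad h Dx Dy Dz (u + v) i j k = div_grad h Dx Dy Dz u i j k + div_grad h Dx Dy Dz v i j k"
  by (simp add: div_grad_def add_divide_distrib[symmetric] algebra_simps)

lemma div_grad_scale:
  "div_grad h Dx Dy Dz (grid_scale c v) i j k = c * div_grad h Dx Dy Dz v i j k"
  by (simp add: div_grad_def grid_scale_def algebra_simps)

lemma div_grad_diff:
  "div_grad h Dx Dy Dz (\<lambda>i j k. u i j k - v i j k) i j k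
   = div_grad h Dx Dy Dz u i j k - div_grad h Dx Dy Dz v i j k"
  by (simp add: div_grad_def diff_divide_distrib[symmetric] algebra_simps)

locale coercive_coeffs =
  fixes N :: nat and h M0 :: real and Dx Dy Dz :: grid
  assumes N: "1 \<le> N" and h: "h \<noteq> 0" and M0: "0 < M0"
    and periodic: "Dx \<in> C_per N" "Dy \<in> C_per N" "Dz \<in> C_per N"
    and lower: "\<And>i j k. M0 \<le> Dx i j k \<and> M0 \<le> Dy i j k \<and> M0 \<le> Dz i j k"
begin

lemma kernel_mean_zero:
  assumes w: "w \<in> C_per N" "cell_sum N w = 0" and dg: "\<And>i j k. div_grad h Dx Dy Dz w i j k = 0"
  shows "w i j k = 0"
proof -
  have "M0 * energy N w \<le> 0"
    using div_grad_coercive[OF w(1) periodic lower h] by (simp add: dg cell_sum_const)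
  then have "energy N w = 0" using M0 energy_nonneg[of N w] by (simp add: mult_le_0_iff)
  then show ?thesis using abs_le_energy_if_mean_zero[OF w(1) N w(2), of i j k] by simp
qed

text \<open>Adding the mean makes the operator injective on all periodic grid functions, so
  finite dimensionality yields surjectivity.\<close>

definition shifted_op :: "grid \<Rightarrow> grid" where
  "shifted_op v = (\<lambda>i j k. - div_grad h Dx Dy Dz v i j k + cell_sum N v)"

lemma shifted_op_linear: "Vector_Spaces.linear grid_scale grid_scale shifted_op"
  unfolding Vector_Spaces.linear_iff
proof (intro conjI allI grid.vector_space_axioms)
  show "shifted_op (x + y) = shifted_op x + shifted_op y" for x y
  proof -
    have "cell_sum N (x + y) = cell_sum N x + cell_sum N y"
      using cell_sum_add[of N x y] by (simp add: plus_fun_def)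
    then show ?thesis by (simp add: shifted_op_def fun_eq_iff div_grad_add)
  qed
next
  show "shifted_op (grid_scale c x) = grid_scale c (shifted_op x)" for c x
  proof -
    have "cell_sum N (grid_scale c x) = c * cell_sum N x"
      by (simp add: grid_scale_def cell_sum_cmult)
    then show ?thesis
      by (simp add: shifted_op_def div_grad_scale) (simp add: grid_scale_def fun_eq_iff algebra_simps)
  qed
qed

lemma cell_sum_shifted_op: "v \<in> C_per N \<Longrightarrow> cell_sum N (shifted_op v) = real N ^ 3 * cell_sum N v"
  using cell_sum_div_grad[OF _ periodic, of v h]
  unfolding shifted_op_def cell_sum_add cell_sum_const
  by (simp add: cell_sum_minus)

lemma shifted_op_solves:
  assumes "v \<in> C_per N" "shifted_op v = \<psi>" "cell_sum N \<psi> = 0"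
  shows "cell_sum N v = 0" "\<And>i j k. - div_grad h Dx Dy Dz v i j k = \<psi> i j k"
proof -
  show mean: "cell_sum N v = 0"
    using assms N cell_sum_shifted_op[OF assms(1)] by simp
  show "- div_grad h Dx Dy Dz v i j k = \<psi> i j k" for i j k
    using assms(2) mean by (auto simp: shifted_op_def)
qed

lemma solvable:
  assumes "\<psi> \<in> C_per0 N"
  shows "\<exists>v\<in>C_per0 N. \<forall>i j k. - div_grad h Dx Dy Dz v i j k = \<psi> i j k"
proof -
  have into: "shifted_op ` C_per N \<subseteq> C_per N"
    unfolding shifted_op_def
    using C_per_add[OF C_per_comp[where F = uminus, OF C_per_div_grad[OF _ periodic]] C_per_const] by blast
  have "inj_on shifted_op (C_per N)"
  proof (rule inj_onI)
    fix x y assume x: "x \<in> C_per N" and y: "y \<in> C_per N" and eq: "shifted_op x = shifted_op y"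
    define w where "w = (\<lambda>i j k. x i j k - y i j k)"
    have w: "w \<in> C_per N" unfolding w_def by (rule C_per_diff[OF x y])
    have "shifted_op w = (\<lambda>i j k. shifted_op x i j k - shifted_op y i j k)"
      using cell_sum_diff[of N x y] by (simp add: w_def shifted_op_def div_grad_diff fun_eq_iff)
    then have "shifted_op w = (\<lambda>i j k. 0)" by (simp add: eq)
    from shifted_op_solves[OF w this] have "w i j k = 0" for i j k
      using kernel_mean_zero[OF w] by (simp add: cell_sum_const)
    then show "x = y" by (auto simp: w_def fun_eq_iff)
  qed
  moreover have "finite (cell_indicator N ` cells N)" by (simp add: cells_def)
  ultimately have "shifted_op ` C_per N = C_per N"
    using into unfolding C_per_eq_span[OF N]
    by (intro grid.linear_inj_on_span_imp_surj_on[OF shifted_op_linear])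
  then obtain v where v: "v \<in> C_per N" "shifted_op v = \<psi>"
    using assms by (force simp: C_per0_iff)
  have "cell_sum N \<psi> = 0" using assms by (simp add: C_per0_iff)
  from shifted_op_solves[OF v this] show ?thesis
    using v(1) by (intro bexI[of _ v]) (auto simp: C_per0_iff)
qed

lemma unique_solution:
  assumes u: "u \<in> C_per0 N" and v: "v \<in> C_per0 N"
    and eq: "\<And>i j k. div_grad h Dx Dy Dz u i j k = div_grad h Dx Dy Dz v i j k"
  shows "u = v"
proof -
  have "u \<in> C_per N" "v \<in> C_per N" "cell_sum N u = 0" "cell_sum N v = 0"
    using u v by (simp_all add: C_per0_iff)
  then have "(\<lambda>i j k. u i j k - v i j k) \<in> C_per N" "cell_sum N (\<lambda>i j k. u i j k - v i j k) = 0"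
    by (simp_all add: C_per_diff cell_sum_diff)
  then have "u i j k - v i j k = 0" for i j k
    by (rule kernel_mean_zero) (simp add: div_grad_diff eq)
  then show ?thesis by (simp add: fun_eq_iff)
qed

lemma ex1_solution:
  assumes "\<psi> \<in> C_per0 N"
  shows "\<exists>!v. v \<in> C_per0 N \<and> (\<forall>i j k. - div_grad h Dx Dy Dz v i j k = \<psi> i j k)"
proof -
  obtain v where v: "v \<in> C_per0 N" "\<forall>i j k. - div_grad h Dx Dy Dz v i j k = \<psi> i j k"
    using solvable[OF assms] by blast
  show ?thesis
  proof (rule ex1I[of _ v])
    fix u assume u: "u \<in> C_per0 N \<and> (\<forall>i j k. - div_grad h Dx Dy Dz u i j k = \<psi> i j k)"
    then have "div_grad h Dx Dy Dz u i j k = div_grad h Dx Dy Dz v i j k" for i j k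
      using v(2) by (metis neg_equal_iff_equal)
    then show "u = v" using u by (intro unique_solution v(1)) simp_all
  qed (use v in blast)
qed

end

lemma L_inv_solves:
  assumes "coercive_coeffs N h M0 (face_mob_x Mob \<phi>) (face_mob_y Mob \<phi>) (face_mob_z Mob \<phi>)"
    and "\<psi> \<in> C_per0 N"
  shows "L_inv N h Mob \<phi> \<psi> \<in> C_per0 N"
    and "\<And>i j k. - div_grad h (face_mob_x Mob \<phi>) (face_mob_y Mob \<phi>) (face_mob_z Mob \<phi>)
                     (L_inv N h Mob \<phi> \<psi>) i j k = \<psi> i j k"
  using theI'[OF coercive_coeffs.ex1_solution[OF assms]] unfolding L_inv_def by simp_all

lemma C_per_face_mob:
  assumes "\<phi> \<in> C_per N"
  shows "face_mob_x Mob \<phi> \<in> C_per N" "face_mob_y Mob \<phi> \<in> C_per N" "face_mob_z Mob \<phi> \<in> C_per N"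
proof -
  have "(\<lambda>i j k. Mob ((\<phi> (i + a) (j + b) (k + c) + \<phi> i j k) / 2)) \<in> C_per N" for a b c
    using C_per_comp[OF C_per_add[OF C_per_shift[OF assms] assms], of "\<lambda>x. Mob (x / 2)"] by simp
  from this[of 1 0 0] this[of 0 1 0] this[of 0 0 1] show
    "face_mob_x Mob \<phi> \<in> C_per N" "face_mob_y Mob \<phi> \<in> C_per N" "face_mob_z Mob \<phi> \<in> C_per N"
    by (simp_all add: face_mob_x_def[abs_def] face_mob_y_def[abs_def] face_mob_z_def[abs_def])
qed

section \<open>The maximum-norm estimate\<close>

lemma scaled_energy_bound:
  assumes h: "0 < h" and L0: "0 < L" and L: "h * real N = L" and M0: "0 < M0" and K: "0 \<le> K"
    and E: "0 \<le> E" "M0^2 * E \<le> 3 * h^4 * K^2 * real N ^ 5"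
  shows "4 * sqrt (24 * E) \<le> 36 * K * L^2 * sqrt L / M0 * h powr (-1/2)"
proof -
  have "h^4 * real N ^ 5 = L^5 / h"
    using h by (simp add: L[symmetric] field_simps flip: power_Suc)
  then have "M0^2 * E \<le> 3 * K^2 * (L^5 / h)"
    using E(2) by (simp add: ac_simps)
  then have "E \<le> 3 * K^2 * L^5 / (M0^2 * h)"
    using M0 h by (simp add: field_simps)
  have "(4 * sqrt (24 * E))^2 = 384 * E" using E by (simp add: power_mult_distrib)
  also have "\<dots> \<le> 1152 * K^2 * L^5 / (M0^2 * h)"
    using \<open>E \<le> _\<close> by simp
  also have "\<dots> \<le> 1296 * K^2 * L^5 / (M0^2 * h)"
    using h L0 M0 by (intro divide_right_mono mult_right_mono) simp_all
  also have "\<dots> = (36 * K * L^2 * sqrt L / M0 * h powr (-1/2))^2"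
  proof -
    have p: "(h powr (-1/2))^2 = 1 / h"
      using h by (simp add: power2_eq_square powr_add[symmetric] powr_minus_divide)
    have "(L^2)^2 * (sqrt L)^2 = L^4 * L^1" using L0 by (simp flip: power_mult)
    also have "\<dots> = L^5" by (simp only: power_add[symmetric]) simp
    finally have q: "(L^2)^2 * (sqrt L)^2 = L^5" .
    have "(36 * K * L^2 * sqrt L / M0 * h powr (-1/2))^2
        = 1296 * K^2 * ((L^2)^2 * (sqrt L)^2) / M0^2 * (h powr (-1/2))^2"
      by (simp add: power_mult_distrib power_divide mult.assoc)
    then show ?thesis unfolding p q by simp
  qed
  finally have "(4 * sqrt (24 * E))^2 \<le> (36 * K * L^2 * sqrt L / M0 * h powr (-1/2))^2" .
  moreover have "0 \<le> 36 * K * L^2 * sqrt L / M0 * h powr (-1/2)"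
    using L0 M0 K by simp
  ultimately show ?thesis by (rule power2_le_imp_le)
qed

context coercive_coeffs
begin

lemma energy_bound:
  assumes v: "v \<in> C_per0 N" and eq: "\<And>i j k. - div_grad h Dx Dy Dz v i j k = \<psi> i j k"
    and K: "\<And>i j k. (i, j, k) \<in> cells N \<Longrightarrow> \<bar>\<psi> i j k\<bar> \<le> K"
  shows "M0^2 * energy N v \<le> 3 * h^4 * K^2 * real N ^ 5"
proof -
  define E where "E = energy N v"
  define A where "A = cell_sum N (\<lambda>i j k. \<bar>v i j k\<bar>)"
  have per: "v \<in> C_per N" and mean: "cell_sum N v = 0"
    using v by (simp_all add: C_per0_iff)
  have E: "0 \<le> E" unfolding E_def by (rule energy_nonneg)
  have K0: "0 \<le> K" using K[of 1 1 1] N by (force simp: cells_def)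
  have "cell_sum N (\<lambda>i j k. v i j k * \<psi> i j k) \<le> cell_sum N (\<lambda>i j k. K * \<bar>v i j k\<bar>)"
    unfolding cell_sum_def
  proof (rule sum_mono, clarify)
    fix i j k assume "(i, j, k) \<in> cells N"
    then have "\<bar>v i j k\<bar> * \<bar>\<psi> i j k\<bar> \<le> \<bar>v i j k\<bar> * K" by (intro mult_left_mono K) simp_all
    then show "v i j k * \<psi> i j k \<le> K * \<bar>v i j k\<bar>"
      by (metis abs_ge_self abs_mult mult.commute order.trans)
  qed
  then have "h^2 * cell_sum N (\<lambda>i j k. v i j k * \<psi> i j k) \<le> h^2 * (K * A)"
    unfolding A_def cell_sum_cmult by (rule mult_left_mono) simp
  then have "M0 * E \<le> h^2 * (K * A)"
    using div_grad_coercive[OF per periodic lower h] unfolding eq E_def by linarith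
  then have "(M0 * E)^2 \<le> (h^2 * (K * A))^2"
    using M0 E by (intro power_mono) simp_all
  also have "\<dots> = h^4 * K^2 * A^2" by (simp add: power_mult_distrib flip: power_mult)
  finally have ME: "(M0 * E)^2 \<le> h^4 * K^2 * A^2" .
  have "A^2 \<le> (\<Sum>(i, j, k)\<in>cells N. \<bar>v i j k\<bar>^2) * card (cells N)"
    unfolding A_def cell_sum_def
    using sum_squared_le_sum_of_squares[of "\<lambda>(i, j, k). \<bar>v i j k\<bar>" "cells N"]
    by (simp add: case_prod_beta')
  also have "\<dots> = real N ^ 3 * cell_sum N (\<lambda>i j k. (v i j k)^2)"
    by (simp add: cell_sum_def cells_def card_cartesian_product power3_eq_cube)
  also have "\<dots> \<le> real N ^ 3 * (3 * real N ^ 2 * E)"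
    unfolding E_def by (intro mult_left_mono mean_zero_poincare[OF per N mean]) simp
  finally have "A^2 \<le> 3 * real N ^ 5 * E" by (simp add: algebra_simps eval_nat_numeral)
  then have "h^4 * K^2 * A^2 \<le> h^4 * K^2 * (3 * real N ^ 5 * E)"
    by (intro mult_left_mono) simp_all
  with ME have "M0^2 * E * E \<le> 3 * h^4 * K^2 * real N ^ 5 * E"
    by (simp add: power2_eq_square algebra_simps)
  then show ?thesis
    unfolding E_def[symmetric] using K0 E
    by (cases "E = 0") (simp_all add: mult_le_cancel_right)
qed

lemma abs_solution_le:
  assumes h_pos: "0 < h" and L: "0 < L" "h * real N = L"
    and v: "v \<in> C_per0 N" and eq: "\<And>i j k. - div_grad h Dx Dy Dz v i j k = \<psi> i j k"
    and K: "\<And>i j k. (i, j, k) \<in> cells N \<Longrightarrow> \<bar>\<psi> i j k\<bar> \<le> K"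
  shows "\<bar>v i j k\<bar> \<le> 36 * K * L^2 * sqrt L / M0 * h powr (-1/2)"
proof -
  have "0 \<le> K" using K[of 1 1 1] N by (force simp: cells_def)
  with energy_bound[OF v eq K]
  have "4 * sqrt (24 * energy N v) \<le> 36 * K * L^2 * sqrt L / M0 * h powr (-1/2)"
    using M0 by (intro scaled_energy_bound[OF h_pos L]) (simp_all add: energy_nonneg)
  moreover have "\<bar>v i j k\<bar> \<le> 4 * sqrt (24 * energy N v)"
    using v N by (intro abs_le_energy_if_mean_zero) (simp_all add: C_per0_iff)
  ultimately show ?thesis by linarith
qed

end

lemma abs_le_sup_norm: "(i, j, k) \<in> cells N \<Longrightarrow> \<bar>f i j k\<bar> \<le> sup_norm N f"
  unfolding sup_norm_def
  by (intro Max_ge finite_imageI rev_image_eqI[of "(i, j, k)"]) (simp_all add: cells_def)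

lemma sup_norm_le:
  assumes "1 \<le> N" "\<And>i j k. \<bar>f i j k\<bar> \<le> B"
  shows "sup_norm N f \<le> B"
  unfolding sup_norm_def using assms by (subst Max_le_iff) (auto simp: cells_def)

theorem lemma3p2:
  fixes L M :: real
  assumes "L > 0" and "M > 0"
  shows "\<exists>C3 > 0. \<forall>(N::nat) (M0::real) (Mob::real \<Rightarrow> real) (\<phi>n::grid) (\<phi>1::grid) (\<phi>2::grid).
           N \<ge> 1 \<longrightarrow> M0 > 0 \<longrightarrow> \<phi>n \<in> C_per N \<longrightarrow>
           (\<forall>i j k. face_mob_x Mob \<phi>n i j k \<ge> M0 \<and> face_mob_y Mob \<phi>n i j k \<ge> M0
                     \<and> face_mob_z Mob \<phi>n i j k \<ge> M0) \<longrightarrow>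
           \<phi>1 \<in> C_per N \<longrightarrow> \<phi>2 \<in> C_per N \<longrightarrow>
           ip (L / real N) N (\<lambda>i j k. \<phi>1 i j k - \<phi>2 i j k) (\<lambda>i j k. 1) = 0 \<longrightarrow>
           sup_norm N \<phi>1 < 1 \<longrightarrow> sup_norm N \<phi>2 \<le> M \<longrightarrow>
           sup_norm N (L_inv N (L / real N) Mob \<phi>n (\<lambda>i j k. \<phi>1 i j k - \<phi>2 i j k))
             \<le> C3 / M0 * (L / real N) powr (-1/2)"
proof (intro exI[of _ "36 * (1 + M) * L^2 * sqrt L"] conjI allI impI)
  show "0 < 36 * (1 + M) * L^2 * sqrt L" using assms by simp
  fix N :: nat and M0 :: real and Mob :: "real \<Rightarrow> real" and \<phi>n \<phi>1 \<phi>2 :: grid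
  assume N: "N \<ge> 1" and M0: "M0 > 0" and \<phi>n: "\<phi>n \<in> C_per N"
    and lower: "\<forall>i j k. face_mob_x Mob \<phi>n i j k \<ge> M0 \<and> face_mob_y Mob \<phi>n i j k \<ge> M0
                     \<and> face_mob_z Mob \<phi>n i j k \<ge> M0"
    and \<phi>1: "\<phi>1 \<in> C_per N" and \<phi>2: "\<phi>2 \<in> C_per N"
    and mass: "ip (L / real N) N (\<lambda>i j k. \<phi>1 i j k - \<phi>2 i j k) (\<lambda>i j k. 1) = 0"
    and bound1: "sup_norm N \<phi>1 < 1" and bound2: "sup_norm N \<phi>2 \<le> M"
  define h where "h = L / real N"
  define \<psi> where "\<psi> = (\<lambda>i j k. \<phi>1 i j k - \<phi>2 i j k)"
  define v where "v = L_inv N h Mob \<phi>n \<psi>"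
  have h: "0 < h" using assms N by (simp add: h_def)
  interpret C: coercive_coeffs N h M0 "face_mob_x Mob \<phi>n" "face_mob_y Mob \<phi>n" "face_mob_z Mob \<phi>n"
    using N h M0 C_per_face_mob[OF \<phi>n] lower by unfold_locales auto
  have "\<psi> \<in> C_per0 N"
    using mass assms N C_per_diff[OF \<phi>1 \<phi>2] by (simp add: C_per0_def ip_def \<psi>_def h_def)
  note v = L_inv_solves[OF C.coercive_coeffs_axioms this, folded v_def]
  have "\<bar>\<psi> i j k\<bar> \<le> 1 + M" if "(i, j, k) \<in> cells N" for i j k
    using abs_le_sup_norm[OF that, of \<phi>1] abs_le_sup_norm[OF that, of \<phi>2] bound1 bound2 by (simp add: \<psi>_def)
  then have "\<bar>v i j k\<bar> \<le> 36 * (1 + M) * L^2 * sqrt L / M0 * h powr (-1/2)" for i j k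
    using assms(1) N h v by (intro C.abs_solution_le) (simp_all add: h_def)
  then show "sup_norm N (L_inv N (L / real N) Mob \<phi>n (\<lambda>i j k. \<phi>1 i j k - \<phi>2 i j k))
             \<le> 36 * (1 + M) * L^2 * sqrt L / M0 * (L / real N) powr (-1/2)"
    unfolding h_def[symmetric] \<psi>_def[symmetric] v_def[symmetric] by (rule sup_norm_le[OF N])
qed

end
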